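(* For all $\Sigma\subseteq\mathsf{FOR}$ and $\varphi\in\mathsf{FOR}$: $\Sigma\vdash_{\mathcal{F}S}\varphi$ if and only if $\Sigma\vDash_{\mathsf{R}^s}\varphi$, where $\mathsf{R}^s$ is the set of all symmetric Epstein relations. In particular every theorem of $\mathcal{F}S$ is valid on every symmetric relation.
   Context: Language: propositional letters $\Phi=\{p_0,p_1,\dots\}$; connectives $\neg$, $\lor,\wedge,\to,\leftrightarrow,\vartriangle,\looparrowright$; $\mathsf{FOR}$ the set of all formulas. An Epstein model is $\langle v,\mathfrak{R}\rangle$ with $v:\Phi\to\{0,1\}$ and $\mathfrak{R}\subseteq\mathsf{FOR}^2$ (an Epstein relation); truth: letters via $v$, boolean connectives classical, $\langle v,\mathfrak{R}\rangle\vDash\varphi\vartriangle\psi$ iff both true and $\langle\varphi,\psi\rangle\in\mathfrak{R}$; $\langle v,\mathfrak{R}\rangle\vDash\varphi\looparrowright\psi$ iff $\varphi\to\psi$ true and $\langle\varphi,\psi\rangle\in\mathfrak{R}$. For a set $\mathsf{R}$ of relations, $\Sigma\vDash_{\mathsf{R}}\varphi$ iff for every $\mathfrak{R}\in\mathsf{R}$ and every valuation $v$, if $\langle v,\mathfrak{R}\rangle$ satisfies all of $\Sigma$ then it satisfies $\varphi$. $\mathcal{F}$ is the least set containing all classical tautologies of the language (substitution instances of propositional tautologies) and the axioms $(p\looparrowright q)\to(p\to q)$ and $(p\vartriangle q)\leftrightarrow((p\looparrowright q)\wedge(p\wedge q))$, closed under uniform substitution and modus ponens. $\mathcal{F}S$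 is the least set containing $\mathcal{F}$ and the axiom $(s)\ (p\looparrowright q)\to((q\looparrowright p)\lor\neg(q\to p))$ ($p,q$ distinct letters), closed under uniform substitution and modus ponens. $\Sigma\vdash_{\mathcal{F}S}\varphi$ iff there is a finite sequence ending in $\varphi$ each member of which is in $\mathcal{F}S\cup\Sigma$ or follows from two earlier members by modus ponens. *)

theory Defs
  imports Main
begin

text \<open>Formulas over letters p_0, p_1, ... (indexed by nat).
  Tri = the content conjunction, Loop = the relatedness implication.\<close>
datatype form =
    Var nat
  | Neg form
  | Disj form form
  | Conj form form
  | Imp form form
  | Iff form form
  | Tri form form
  | Loop form form

fun sat :: "(nat \<Rightarrow> bool) \<Rightarrow> (form \<times> form) set \<Rightarrow> form \<Rightarrow> bool" where
  "sat v R (Var n) = v n"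
| "sat v R (Neg a) = (\<not> sat v R a)"
| "sat v R (Disj a b) = (sat v R a \<or> sat v R b)"
| "sat v R (Conj a b) = (sat v R a \<and> sat v R b)"
| "sat v R (Imp a b) = (sat v R a \<longrightarrow> sat v R b)"
| "sat v R (Iff a b) = (sat v R a \<longleftrightarrow> sat v R b)"
| "sat v R (Tri a b) = (sat v R a \<and> sat v R b \<and> (a, b) \<in> R)"
| "sat v R (Loop a b) = ((sat v R a \<longrightarrow> sat v R b) \<and> (a, b) \<in> R)"

definition conseq :: "(form \<times> form) set set \<Rightarrow> form set \<Rightarrow> form \<Rightarrow> bool" where
  "conseq Rs \<Sigma> \<phi> \<longleftrightarrow>
     (\<forall>R\<in>Rs. \<forall>v. (\<forall>\<sigma>\<in>\<Sigma>. sat v R \<sigma>) \<longrightarrow> sat v R \<phi>)"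

definition Rsym :: "(form \<times> form) set set" where
  "Rsym = {R. sym R}"

fun subst :: "(nat \<Rightarrow> form) \<Rightarrow> form \<Rightarrow> form" where
  "subst s (Var n) = s n"
| "subst s (Neg a) = Neg (subst s a)"
| "subst s (Disj a b) = Disj (subst s a) (subst s b)"
| "subst s (Conj a b) = Conj (subst s a) (subst s b)"
| "subst s (Imp a b) = Imp (subst s a) (subst s b)"
| "subst s (Iff a b) = Iff (subst s a) (subst s b)"
| "subst s (Tri a b) = Tri (subst s a) (subst s b)"
| "subst s (Loop a b) = Loop (subst s a) (subst s b)"

fun boolean :: "form \<Rightarrow> bool" where
  "boolean (Var n) = True"
| "boolean (Neg a) = boolean a"
| "boolean (Disj a b) = (boolean a \<and> boolean b)"
| "boolean (Conj a b) = (boolean a \<and> boolean b)"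
| "boolean (Imp a b) = (boolean a \<and> boolean b)"
| "boolean (Iff a b) = (boolean a \<and> boolean b)"
| "boolean (Tri a b) = False"
| "boolean (Loop a b) = False"

definition classical_taut :: "form \<Rightarrow> bool" where
  "classical_taut \<phi> \<longleftrightarrow>
     (\<exists>\<tau> s. boolean \<tau> \<and> (\<forall>v. sat v {} \<tau>) \<and> \<phi> = subst s \<tau>)"

inductive F :: "form \<Rightarrow> bool" where
  F_taut: "classical_taut \<phi> \<Longrightarrow> F \<phi>"
| F_ax1: "F (Imp (Loop (Var 0) (Var 1)) (Imp (Var 0) (Var 1)))"
| F_ax2: "F (Iff (Tri (Var 0) (Var 1)) (Conj (Loop (Var 0) (Var 1)) (Conj (Var 0) (Var 1))))"
| F_subst: "F \<phi> \<Longrightarrow> F (subst s \<phi>)"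
| F_mp: "F \<phi> \<Longrightarrow> F (Imp \<phi> \<psi>) \<Longrightarrow> F \<psi>"

inductive FS :: "form \<Rightarrow> bool" where
  FS_F: "F \<phi> \<Longrightarrow> FS \<phi>"
| FS_s: "FS (Imp (Loop (Var 0) (Var 1)) (Disj (Loop (Var 1) (Var 0)) (Neg (Imp (Var 1) (Var 0)))))"
| FS_subst: "FS \<phi> \<Longrightarrow> FS (subst s \<phi>)"
| FS_mp: "FS \<phi> \<Longrightarrow> FS (Imp \<phi> \<psi>) \<Longrightarrow> FS \<psi>"

definition derivable_FS :: "form set \<Rightarrow> form \<Rightarrow> bool" where
  "derivable_FS \<Sigma> \<phi> \<longleftrightarrow>
     (\<exists>ds. ds \<noteq> [] \<and> last ds = \<phi> \<and>
        (\<forall>i<length ds. FS (ds ! i) \<or> ds ! i \<in> \<Sigma> \<or>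
            (\<exists>j<i. \<exists>k<i. ds ! k = Imp (ds ! j) (ds ! i))))"

end

theory Submission
  imports Defs "HOL-Library.Countable"
begin

text \<open>Soundness: uniform substitution turns a model into another model whose relation is
  a preimage of the original one, and preimages of symmetric relations are symmetric; axiom (s)
  holds in every model with a symmetric relation.

  Completeness is a Henkin-style canonical model argument. A set \<open>M\<close> that is maximal among
  the sets of premises not deriving \<open>\<phi>\<close> behaves classically on the boolean connectives.
  Interpret the letters by membership in \<open>M\<close> and take as relation the symmetric closure of
  \<open>{(a, b). a \<looparrowright> b \<in> M}\<close>. Symmetrising is harmless: if \<open>a \<looparrowright> b \<in> M\<close> and \<open>b \<rightarrow> a\<close> holds in \<open>M\<close>,
  then axiom (s) forces \<open>b \<looparrowright> a \<in> M\<close>. Hence a formula is true in this model iff it lies in \<open>M\<close>.\<close>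

section \<open>Soundness\<close>

lemma sat_subst:
  "sat v R (subst s \<phi>) = sat (\<lambda>n. sat v R (s n)) (map_prod (subst s) (subst s) -` R) \<phi>"
  by (induction \<phi>) auto

lemma sat_boolean: "boolean \<phi> \<Longrightarrow> sat v R \<phi> = sat v R' \<phi>"
  by (induction \<phi>) auto

lemma sym_vimage_map_prod: "sym R \<Longrightarrow> sym (map_prod f f -` R)"
  unfolding sym_def by auto

lemma classical_taut_valid: "classical_taut \<phi> \<Longrightarrow> sat v R \<phi>"
  unfolding classical_taut_def by (metis sat_boolean sat_subst)

lemma F_valid: "F \<phi> \<Longrightarrow> sat v R \<phi>"
proof (induction arbitrary: v R rule: F.induct)
  case (F_subst \<phi> s)
  then show ?case by (simp add: sat_subst)
qed (auto intro: classical_taut_valid)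

lemma FS_valid_sym: "FS \<phi> \<Longrightarrow> sym R \<Longrightarrow> sat v R \<phi>"
proof (induction arbitrary: v R rule: FS.induct)
  case FS_s
  then show ?case by (auto dest: symD)
next
  case (FS_subst \<phi> s)
  then show ?case by (simp add: sat_subst sym_vimage_map_prod)
qed (auto intro: F_valid)

section \<open>Derivations\<close>

inductive derives :: "form set \<Rightarrow> form \<Rightarrow> bool" (infix "\<turnstile>" 50) for \<Gamma> where
  derives_FS: "FS \<phi> \<Longrightarrow> \<Gamma> \<turnstile> \<phi>"
| derives_assm: "\<phi> \<in> \<Gamma> \<Longrightarrow> \<Gamma> \<turnstile> \<phi>"
| derives_mp: "\<Gamma> \<turnstile> \<phi> \<Longrightarrow> \<Gamma> \<turnstile> Imp \<phi> \<psi> \<Longrightarrow> \<Gamma> \<turnstile> \<psi>"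

lemma derives_sound:
  "\<Gamma> \<turnstile> \<phi> \<Longrightarrow> sym R \<Longrightarrow> \<forall>\<gamma>\<in>\<Gamma>. sat v R \<gamma> \<Longrightarrow> sat v R \<phi>"
  by (induction rule: derives.induct) (auto intro: FS_valid_sym)

definition justified :: "form set \<Rightarrow> form list \<Rightarrow> nat \<Rightarrow> bool" where
  "justified \<Sigma> ds i \<longleftrightarrow>
     FS (ds ! i) \<or> ds ! i \<in> \<Sigma> \<or> (\<exists>j<i. \<exists>k<i. ds ! k = Imp (ds ! j) (ds ! i))"

definition derivation :: "form set \<Rightarrow> form list \<Rightarrow> bool" where
  "derivation \<Sigma> ds \<longleftrightarrow> (\<forall>i<length ds. justified \<Sigma> ds i)"

lemma derivable_FS_iff_derivation:
  "derivable_FS \<Sigma> \<phi> \<longleftrightarrow> (\<exists>ds. ds \<noteq> [] \<and> last ds = \<phi> \<and> derivation \<Sigma> ds)"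
  by (simp add: derivable_FS_def derivation_def justified_def)

lemma justified_append:
  "i < length ds \<Longrightarrow> justified \<Sigma> (ds @ es) i \<longleftrightarrow> justified \<Sigma> ds i"
  unfolding justified_def by (auto simp: nth_append_left)

lemma justified_snoc_last:
  "justified \<Sigma> (ds @ [\<psi>]) (length ds) \<longleftrightarrow>
     FS \<psi> \<or> \<psi> \<in> \<Sigma> \<or> (\<exists>\<phi>\<in>set ds. Imp \<phi> \<psi> \<in> set ds)"
  unfolding justified_def by (auto simp: nth_append_left in_set_conv_nth) (metis nth_mem)

lemma derivation_Nil [simp]: "derivation \<Sigma> []"
  by (simp add: derivation_def)

lemma derivation_snoc:
  "derivation \<Sigma> (ds @ [\<psi>]) \<longleftrightarrow>
     derivation \<Sigma> ds \<and> (FS \<psi> \<or> \<psi> \<in> \<Sigma> \<or> (\<exists>\<phi>\<in>set ds. Imp \<phi> \<psi> \<in> set ds))"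
  by (simp add: derivation_def All_less_Suc justified_append justified_snoc_last conj_commute)

lemma derivation_append:
  "derivation \<Sigma> ds \<Longrightarrow> derivation \<Sigma> es \<Longrightarrow> derivation \<Sigma> (ds @ es)"
proof (induction es rule: rev_induct)
  case (snoc \<psi> es)
  then show ?case
    by (simp only: derivation_snoc append_assoc[symmetric]) auto
qed simp

lemma derivation_derives: "derivation \<Sigma> ds \<Longrightarrow> \<phi> \<in> set ds \<Longrightarrow> \<Sigma> \<turnstile> \<phi>"
proof (induction ds arbitrary: \<phi> rule: rev_induct)
  case (snoc \<psi> ds)
  then show ?case
    by (auto simp: derivation_snoc intro: derives.intros)
qed simp

lemma derives_derivation:
  "\<Sigma> \<turnstile> \<phi> \<Longrightarrow> \<exists>ds. ds \<noteq> [] \<and> last ds = \<phi> \<and> derivation \<Sigma> ds"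
proof (induction rule: derives.induct)
  case (derives_FS \<phi>)
  then show ?case using derivation_snoc[of \<Sigma> "[]" \<phi>] by auto
next
  case (derives_assm \<phi>)
  then show ?case using derivation_snoc[of \<Sigma> "[]" \<phi>] by auto
next
  case (derives_mp \<phi> \<psi>)
  then obtain ds es where
    ds: "ds \<noteq> []" "last ds = \<phi>" "derivation \<Sigma> ds" and
    es: "es \<noteq> []" "last es = Imp \<phi> \<psi>" "derivation \<Sigma> es"
    by blast
  then have "\<phi> \<in> set (ds @ es)" "Imp \<phi> \<psi> \<in> set (ds @ es)"
    by (auto dest: last_in_set)
  with ds es have "derivation \<Sigma> ((ds @ es) @ [\<psi>])"
    by (auto simp only: derivation_snoc derivation_append)
  then show ?case by (intro exI[of _ "(ds @ es) @ [\<psi>]"]) simp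
qed

lemma derivable_FS_iff_derives: "derivable_FS \<Sigma> \<phi> \<longleftrightarrow> \<Sigma> \<turnstile> \<phi>"
  unfolding derivable_FS_iff_derivation
  using derivation_derives derives_derivation by fastforce

lemma derives_mono: "\<Gamma> \<turnstile> \<phi> \<Longrightarrow> \<Gamma> \<subseteq> \<Delta> \<Longrightarrow> \<Delta> \<turnstile> \<phi>"
  by (induction rule: derives.induct) (auto intro: derives.intros)

lemma derives_finite: "\<Gamma> \<turnstile> \<phi> \<Longrightarrow> \<exists>G. finite G \<and> G \<subseteq> \<Gamma> \<and> G \<turnstile> \<phi>"
proof (induction rule: derives.induct)
  case (derives_FS \<phi>)
  then show ?case by (auto intro: derives.intros)
next
  case (derives_assm \<phi>)
  then show ?case by (intro exI[of _ "{\<phi>}"]) (auto intro: derives.intros)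
next
  case (derives_mp \<phi> \<psi>)
  then obtain G H where "finite G" "G \<subseteq> \<Gamma>" "G \<turnstile> \<phi>" "finite H" "H \<subseteq> \<Gamma>" "H \<turnstile> Imp \<phi> \<psi>"
    by blast
  then show ?case
    by (intro exI[of _ "G \<union> H"]) (meson derives.derives_mp derives_mono finite_UnI le_supI sup_ge1 sup_ge2)
qed

section \<open>Classical tautologies\<close>

instance form :: countable
  by countable_datatype

fun boolean_value :: "(form \<Rightarrow> bool) \<Rightarrow> form \<Rightarrow> bool" where
  "boolean_value V (Neg a) = (\<not> boolean_value V a)"
| "boolean_value V (Disj a b) = (boolean_value V a \<or> boolean_value V b)"
| "boolean_value V (Conj a b) = (boolean_value V a \<and> boolean_value V b)"
| "boolean_value V (Imp a b) = (boolean_value V a \<longrightarrow> boolean_value V b)"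
| "boolean_value V (Iff a b) = (boolean_value V a \<longleftrightarrow> boolean_value V b)"
| "boolean_value V a = V a"

text \<open>Letters and \<open>\<vartriangle>\<close>-, \<open>\<looparrowright>\<close>-subformulas become letters indexed by their codes,
  so that substituting \<open>from_nat\<close> recovers the formula.\<close>
fun skeleton :: "form \<Rightarrow> form" where
  "skeleton (Neg a) = Neg (skeleton a)"
| "skeleton (Disj a b) = Disj (skeleton a) (skeleton b)"
| "skeleton (Conj a b) = Conj (skeleton a) (skeleton b)"
| "skeleton (Imp a b) = Imp (skeleton a) (skeleton b)"
| "skeleton (Iff a b) = Iff (skeleton a) (skeleton b)"
| "skeleton a = Var (to_nat a)"

lemma boolean_skeleton: "boolean (skeleton \<phi>)"
  by (induction \<phi>) auto

lemma subst_from_nat_skeleton: "subst from_nat (skeleton \<phi>) = \<phi>"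
  by (induction \<phi>) auto

lemma sat_skeleton: "sat v R (skeleton \<phi>) = boolean_value (v \<circ> to_nat) \<phi>"
  by (induction \<phi>) auto

lemma classical_tautI: "(\<And>V. boolean_value V \<phi>) \<Longrightarrow> classical_taut \<phi>"
  unfolding classical_taut_def
  by (metis boolean_skeleton sat_skeleton subst_from_nat_skeleton)

lemma FS_tautology: "(\<And>V. boolean_value V \<phi>) \<Longrightarrow> FS \<phi>"
  by (intro FS_F F_taut classical_tautI)

lemma deduction_theorem: "insert \<psi> \<Gamma> \<turnstile> \<phi> \<Longrightarrow> \<Gamma> \<turnstile> Imp \<psi> \<phi>"
proof (induction rule: derives.induct)
  case (derives_FS \<phi>)
  have "FS (Imp \<phi> (Imp \<psi> \<phi>))" by (rule FS_tautology) simp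
  with derives_FS show ?case by (metis derives.derives_FS derives.derives_mp)
next
  case (derives_assm \<phi>)
  show ?case
  proof (cases "\<phi> = \<psi>")
    case True
    have "FS (Imp \<psi> \<psi>)" by (rule FS_tautology) simp
    with True show ?thesis by (simp add: derives.derives_FS)
  next
    case False
    have "FS (Imp \<phi> (Imp \<psi> \<phi>))" by (rule FS_tautology) simp
    with False derives_assm show ?thesis
      by (metis derives.derives_FS derives.derives_assm derives.derives_mp insertE)
  qed
next
  case (derives_mp \<phi> \<chi>)
  have "FS (Imp (Imp \<psi> (Imp \<phi> \<chi>)) (Imp (Imp \<psi> \<phi>) (Imp \<psi> \<chi>)))"
    by (rule FS_tautology) simp
  with derives_mp show ?case by (metis derives.derives_FS derives.derives_mp)
qed

section \<open>The canonical model\<close>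

locale maximal_unprovable =
  fixes M :: "form set" and \<phi> :: form
  assumes unprovable: "\<not> M \<turnstile> \<phi>"
    and maximal: "\<And>N. M \<subseteq> N \<Longrightarrow> \<not> N \<turnstile> \<phi> \<Longrightarrow> N = M"
begin

lemma derives_imp_goal_if_notin: "\<chi> \<notin> M \<Longrightarrow> M \<turnstile> Imp \<chi> \<phi>"
  using maximal[of "insert \<chi> M"] by (metis deduction_theorem insertI1 subset_insertI)

lemma mem_iff_derives: "\<chi> \<in> M \<longleftrightarrow> M \<turnstile> \<chi>"
  using derives_imp_goal_if_notin unprovable by (metis derives_assm derives_mp)

lemma FS_mem: "FS \<chi> \<Longrightarrow> \<chi> \<in> M"
  by (simp add: mem_iff_derives derives_FS)

lemma mp_mem: "Imp a b \<in> M \<Longrightarrow> a \<in> M \<Longrightarrow> b \<in> M"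
  by (metis mem_iff_derives derives_mp)

lemma tautology_mp_mem: "(\<And>V. boolean_value V (Imp a b)) \<Longrightarrow> a \<in> M \<Longrightarrow> b \<in> M"
  by (rule mp_mem[OF FS_mem[OF FS_tautology]])

lemma tautology_iff_mem:
  "(\<And>V. boolean_value V a \<longleftrightarrow> boolean_value V b) \<Longrightarrow> a \<in> M \<longleftrightarrow> b \<in> M"
  using tautology_mp_mem[of a b] tautology_mp_mem[of b a] by auto

lemma tautology_mp2_mem:
  "(\<And>V. boolean_value V (Imp a (Imp b c))) \<Longrightarrow> a \<in> M \<Longrightarrow> b \<in> M \<Longrightarrow> c \<in> M"
  by (rule mp_mem[OF mp_mem[OF FS_mem[OF FS_tautology]]])

lemma mem_Neg: "Neg a \<in> M \<longleftrightarrow> a \<notin> M"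
proof
  assume "Neg a \<in> M"
  show "a \<notin> M"
  proof
    assume "a \<in> M"
    with \<open>Neg a \<in> M\<close> have "\<phi> \<in> M" by (rule tautology_mp2_mem[rotated]) simp
    then show False using unprovable by (simp add: mem_iff_derives)
  qed
next
  assume "a \<notin> M"
  show "Neg a \<in> M"
  proof (rule ccontr)
    assume "Neg a \<notin> M"
    have "FS (Imp (Imp a \<phi>) (Imp (Imp (Neg a) \<phi>) \<phi>))" by (rule FS_tautology) auto
    then have "M \<turnstile> \<phi>"
      using derives_imp_goal_if_notin[OF \<open>a \<notin> M\<close>] derives_imp_goal_if_notin[OF \<open>Neg a \<notin> M\<close>]
      by (metis derives_FS derives_mp)
    then show False using unprovable by simp
  qed
qed

lemma mem_Imp: "Imp a b \<in> M \<longleftrightarrow> (a \<in> M \<longrightarrow> b \<in> M)"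
proof
  assume "Imp a b \<in> M"
  then show "a \<in> M \<longrightarrow> b \<in> M" using mp_mem[of a b] by blast
next
  assume "a \<in> M \<longrightarrow> b \<in> M"
  then consider "b \<in> M" | "Neg a \<in> M" by (auto simp: mem_Neg)
  then show "Imp a b \<in> M"
    by cases (auto intro: tautology_mp_mem[of b] tautology_mp_mem[of "Neg a"])
qed

lemma mem_Disj: "Disj a b \<in> M \<longleftrightarrow> a \<in> M \<or> b \<in> M"
proof -
  have "Disj a b \<in> M \<longleftrightarrow> Imp (Neg a) b \<in> M"
    by (rule tautology_iff_mem) auto
  then show ?thesis by (auto simp: mem_Imp mem_Neg)
qed

lemma mem_Conj: "Conj a b \<in> M \<longleftrightarrow> a \<in> M \<and> b \<in> M"
proof -
  have "Conj a b \<in> M \<longleftrightarrow> Neg (Imp a (Neg b)) \<in> M"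
    by (rule tautology_iff_mem) auto
  then show ?thesis by (auto simp: mem_Imp mem_Neg)
qed

lemma mem_Iff: "Iff a b \<in> M \<longleftrightarrow> (a \<in> M \<longleftrightarrow> b \<in> M)"
proof -
  have "Iff a b \<in> M \<longleftrightarrow> Conj (Imp a b) (Imp b a) \<in> M"
    by (rule tautology_iff_mem) auto
  then show ?thesis by (auto simp: mem_Conj mem_Imp)
qed

lemma axiom_instance_mem:
  "FS \<chi> \<Longrightarrow> subst (\<lambda>n. if n = 0 then a else b) \<chi> \<in> M"
  by (intro FS_mem FS_subst)

lemma Loop_memD: "Loop a b \<in> M \<Longrightarrow> a \<in> M \<Longrightarrow> b \<in> M"
  using axiom_instance_mem[OF FS_F[OF F_ax1], of a b] by (simp add: mem_Imp)

lemma Loop_mem_swap: "Loop a b \<in> M \<Longrightarrow> (b \<in> M \<longrightarrow> a \<in> M) \<Longrightarrow> Loop b a \<in> M"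
  using axiom_instance_mem[OF FS_s, of a b] by (simp add: mem_Imp mem_Disj mem_Neg)

lemma mem_Tri: "Tri a b \<in> M \<longleftrightarrow> Loop a b \<in> M \<and> a \<in> M \<and> b \<in> M"
  using axiom_instance_mem[OF FS_F[OF F_ax2], of a b] by (simp add: mem_Iff mem_Conj)

definition canonical_rel :: "(form \<times> form) set" where
  "canonical_rel = {(a, b). Loop a b \<in> M \<or> Loop b a \<in> M}"

lemma sym_canonical_rel: "sym canonical_rel"
  unfolding canonical_rel_def sym_def by auto

lemma sat_canonical_iff_mem: "sat (\<lambda>n. Var n \<in> M) canonical_rel \<chi> \<longleftrightarrow> \<chi> \<in> M"
proof (induction \<chi>)
  case (Tri a b)
  then show ?case
    using Loop_mem_swap[of b a] by (auto simp: canonical_rel_def mem_Tri)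
next
  case (Loop a b)
  then show ?case
    using Loop_memD[of a b] Loop_mem_swap[of b a] by (auto simp: canonical_rel_def)
qed (auto simp: mem_Neg mem_Disj mem_Conj mem_Imp mem_Iff)

end

lemma lindenbaum:
  assumes "\<not> \<Sigma> \<turnstile> \<phi>"
  obtains M where "\<Sigma> \<subseteq> M" "maximal_unprovable M \<phi>"
proof -
  let ?A = "{N. \<Sigma> \<subseteq> N \<and> \<not> N \<turnstile> \<phi>}"
  have "\<Union>C \<in> ?A" if "C \<noteq> {}" and chain: "subset.chain ?A C" for C
  proof -
    have "\<not> \<Union>C \<turnstile> \<phi>"
    proof
      assume "\<Union>C \<turnstile> \<phi>"
      then obtain G where "finite G" "G \<subseteq> \<Union>C" "G \<turnstile> \<phi>"
        using derives_finite by blast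
      moreover obtain B where "B \<in> C" "G \<subseteq> B"
        using finite_subset_Union_chain[OF \<open>finite G\<close> \<open>G \<subseteq> \<Union>C\<close> \<open>C \<noteq> {}\<close> chain] .
      ultimately show False
        using chain by (auto simp: subset_chain_def dest: derives_mono)
    qed
    moreover have "\<Sigma> \<subseteq> \<Union>C"
      using that by (simp add: subset_chain_def) blast
    ultimately show ?thesis by simp
  qed
  moreover have "?A \<noteq> {}" using assms by blast
  ultimately obtain M where M: "\<Sigma> \<subseteq> M" "\<not> M \<turnstile> \<phi>"
    and maximal: "\<And>N. \<Sigma> \<subseteq> N \<Longrightarrow> \<not> N \<turnstile> \<phi> \<Longrightarrow> M \<subseteq> N \<Longrightarrow> N = M"
    using subset_Zorn_nonempty[of ?A] by auto
  have "maximal_unprovable M \<phi>"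
    using M maximal by unfold_locales blast+
  with M(1) show ?thesis by (rule that)
qed

theorem strong_completeness: "conseq Rsym \<Sigma> \<phi> \<Longrightarrow> \<Sigma> \<turnstile> \<phi>"
proof (rule ccontr)
  assume "conseq Rsym \<Sigma> \<phi>" "\<not> \<Sigma> \<turnstile> \<phi>"
  then obtain M where "\<Sigma> \<subseteq> M" and M: "maximal_unprovable M \<phi>"
    using lindenbaum by blast
  interpret maximal_unprovable M \<phi> by (fact M)
  let ?v = "\<lambda>n. Var n \<in> M"
  have "canonical_rel \<in> Rsym"
    by (simp add: Rsym_def sym_canonical_rel)
  moreover have "\<forall>\<sigma>\<in>\<Sigma>. sat ?v canonical_rel \<sigma>"
    using \<open>\<Sigma> \<subseteq> M\<close> sat_canonical_iff_mem by blast
  ultimately have "sat ?v canonical_rel \<phi>"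
    using \<open>conseq Rsym \<Sigma> \<phi>\<close> unfolding conseq_def by blast
  then have "\<phi> \<in> M"
    by (simp only: sat_canonical_iff_mem)
  then show False
    using unprovable by (simp add: mem_iff_derives)
qed

theorem mainTheorem16:
  shows "(\<forall>\<Sigma> \<phi>. derivable_FS \<Sigma> \<phi> \<longleftrightarrow> conseq Rsym \<Sigma> \<phi>)
         \<and> (\<forall>\<phi>. FS \<phi> \<longrightarrow> (\<forall>R\<in>Rsym. \<forall>v. sat v R \<phi>))"
proof (intro conjI allI impI ballI iffI)
  fix \<Sigma> \<phi> assume "derivable_FS \<Sigma> \<phi>"
  then show "conseq Rsym \<Sigma> \<phi>"
    by (auto simp: derivable_FS_iff_derives conseq_def Rsym_def intro: derives_sound)
next
  fix \<Sigma> \<phi> assume "conseq Rsym \<Sigma> \<phi>"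
  then show "derivable_FS \<Sigma> \<phi>"
    by (simp add: derivable_FS_iff_derives strong_completeness)
next
  fix \<phi> R v assume "FS \<phi>" "R \<in> Rsym"
  then show "sat v R \<phi>"
    by (simp add: Rsym_def FS_valid_sym)
qed

end
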